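(* Let $q$ be a prime power. The number of triples $(\lambda_0,\lambda_1,\lambda_2)\in\mathbb{F}_q^3$ for which the polynomial $p(x)=x^3-\lambda_2x^2-\lambda_1x-\lambda_0$ is irreducible over $\mathbb{F}_q$ and the polynomial $r(x)=x^3+\lambda_2x^2-(\lambda_1-1)x+\lambda_0$ is reducible over $\mathbb{F}_q$ is at least $\frac{q(q-1)^2}{9}-\frac{2(q-1)}{3}$. *)

theory Defs
  imports "HOL-Computational_Algebra.Polynomial_Factorial"
begin

end

theory Submission
  imports Defs
begin

text \<open>The reflected cubic r satisfies r(-c) = -(p(c) + c), so r is reducible iff p(c) = -c for
  some c. Each rootless p has at most three such c, so it suffices to find, for every c \<noteq> 0,
  at least q + (q - 1)(q - 2)/3 rootless p with p(c) = -c. These p are parametrised by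
  (\<lambda>1, \<lambda>2), and p(x) = (x - c)(x^2 + x c + c^2 - \<lambda>2 (x + c) - \<lambda>1) - c shows that p vanishes at
  x \<noteq> c iff (\<lambda>1, \<lambda>2) lies on an affine line L x of slope x + c. The q - 1 lines meet pairwise
  in one point, and no point lies on more than three of them since p has at most three roots;
  a truncated inclusion-exclusion then counts the points off all lines.\<close>

lemma irreducible_iff_no_root_if_degree_le_3:
  fixes p :: "'a::field poly"
  assumes "2 \<le> degree p" and "degree p \<le> 3"
  shows "irreducible p \<longleftrightarrow> (\<forall>x. poly p x \<noteq> 0)"
proof
  assume irr: "irreducible p"
  show "\<forall>x. poly p x \<noteq> 0"
  proof (intro allI notI)
    fix x assume "poly p x = 0"
    then obtain k where k: "p = [:-x, 1:] * k"
      by (auto simp: poly_eq_0_iff_dvd)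
    with assms have "k \<noteq> 0" by auto
    have "\<not> is_unit [:-x, 1:]" by (simp add: is_unit_iff_degree)
    with irreducibleD[OF irr k] \<open>k \<noteq> 0\<close> have "degree k = 0"
      by (simp add: is_unit_iff_degree)
    have "degree p = degree [:-x, 1:] + degree k"
      unfolding k by (rule degree_mult_eq) (use \<open>k \<noteq> 0\<close> in auto)
    with \<open>degree k = 0\<close> have "degree p = 1" by simp
    with assms show False by simp
  qed
next
  assume no_root: "\<forall>x. poly p x \<noteq> 0"
  have linear_factor_has_no_root: False if "f dvd p" "degree f = 1" for f
  proof -
    obtain a b where "f = [:b, a:]" "a \<noteq> 0" using degree1_coeffs[OF \<open>degree f = 1\<close>] .
    then have "poly f (- b / a) = 0" by simp
    with \<open>f dvd p\<close> have "poly p (- b / a) = 0" by auto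
    with no_root show False by blast
  qed
  show "irreducible p"
  proof (rule irreducibleI)
    show "p \<noteq> 0" using assms by auto
    then show "\<not> is_unit p" using assms by (simp add: is_unit_iff_degree)
    fix a b assume ab: "p = a * b"
    with \<open>p \<noteq> 0\<close> have "a \<noteq> 0" "b \<noteq> 0" by auto
    with ab have "degree a + degree b \<le> 3" using assms by (simp add: degree_mult_eq)
    moreover have "degree a \<noteq> 1" "degree b \<noteq> 1"
      using linear_factor_has_no_root ab by (metis dvd_triv_left, metis dvd_triv_right)
    ultimately have "degree a = 0 \<or> degree b = 0" by linarith
    with \<open>a \<noteq> 0\<close> \<open>b \<noteq> 0\<close> show "is_unit a \<or> is_unit b" by (auto simp: is_unit_iff_degree)
  qed
qed

lemma card_offdiag:
  assumes "finite A"
  shows "card {(x, y) \<in> A \<times> A. x \<noteq> y} = card A * (card A - 1)"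
proof -
  let ?diagonal = "(\<lambda>x. (x, x)) ` A"
  have "{(x, y) \<in> A \<times> A. x \<noteq> y} = A \<times> A - ?diagonal" by auto
  moreover have "card (A \<times> A - ?diagonal) = card (A \<times> A) - card ?diagonal"
    using assms by (intro card_Diff_subset) auto
  moreover have "card ?diagonal = card A" by (simp add: card_image inj_on_def)
  ultimately show ?thesis by (simp add: card_cartesian_product diff_mult_distrib2)
qed

lemma sum_card_le_by_double_counting:
  assumes "finite S" "finite C" and "\<And>s. s \<in> S \<Longrightarrow> card {c \<in> C. R s c} \<le> k"
  shows "(\<Sum>c\<in>C. card {s \<in> S. R s c}) \<le> k * card S"
proof -
  have "(\<Sum>c\<in>C. card {s \<in> S. R s c}) = (\<Sum>s\<in>S. card {c \<in> C. R s c})"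
    by (rule sum_multicount_gen[symmetric]) (use assms in auto)
  also have "\<dots> \<le> (\<Sum>s\<in>S. k)" by (rule sum_mono) (rule assms(3))
  finally show ?thesis by (simp add: mult.commute)
qed

text \<open>Truncated inclusion-exclusion: a point on N \<le> 3 of the lines satisfies
  [N = 0] \<ge> 1 - N + N (N - 1) / 3, and the sums of N and of N (N - 1) over all points
  are fixed by the incidence conditions.\<close>
lemma card_uncovered_ge:
  fixes L :: "'x \<Rightarrow> 'p set"
  assumes "finite U" "finite X"
    and subset: "\<And>x. x \<in> X \<Longrightarrow> L x \<subseteq> U"
    and size: "\<And>x. x \<in> X \<Longrightarrow> card (L x) = m"
    and meet: "\<And>x y. x \<in> X \<Longrightarrow> y \<in> X \<Longrightarrow> x \<noteq> y \<Longrightarrow> card (L x \<inter> L y) = 1"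
    and through: "\<And>z. z \<in> U \<Longrightarrow> card {x \<in> X. z \<in> L x} \<le> 3"
  shows "real (card U) - real (card X * m) + real (card X * (card X - 1)) / 3
           \<le> real (card (U - (\<Union>x\<in>X. L x)))"
proof -
  define N where "N z = card {x \<in> X. z \<in> L x}" for z
  have first_moment: "(\<Sum>z\<in>U. N z) = card X * m"
  proof -
    have "{z \<in> U. z \<in> L x} = L x" if "x \<in> X" for x
      using subset[OF that] by blast
    then show ?thesis
      unfolding N_def using size by (subst sum_multicount) (use assms in auto)
  qed
  have second_moment: "(\<Sum>z\<in>U. N z * (N z - 1)) = card X * (card X - 1)"
  proof -
    define D where "D = {(x, y) \<in> X \<times> X. x \<noteq> y}"
    have "finite D" unfolding D_def using \<open>finite X\<close> by (auto intro: finite_subset)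
    have pairs_through: "N z * (N z - 1) = card {d \<in> D. z \<in> L (fst d) \<inter> L (snd d)}" for z
    proof -
      have lines_through_z: "{d \<in> D. z \<in> L (fst d) \<inter> L (snd d)}
          = {(x, y) \<in> {x \<in> X. z \<in> L x} \<times> {x \<in> X. z \<in> L x}. x \<noteq> y}"
        unfolding D_def by auto
      have "finite {x \<in> X. z \<in> L x}" using \<open>finite X\<close> by simp
      then show ?thesis by (simp only: N_def lines_through_z card_offdiag)
    qed
    have "card {z \<in> U. z \<in> L (fst d) \<inter> L (snd d)} = 1" if "d \<in> D" for d
    proof -
      have "{z \<in> U. z \<in> L (fst d) \<inter> L (snd d)} = L (fst d) \<inter> L (snd d)"
        using that subset unfolding D_def by (cases d) auto
      then show ?thesis using that meet unfolding D_def by (cases d) auto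
    qed
    then have "(\<Sum>z\<in>U. card {d \<in> D. z \<in> L (fst d) \<inter> L (snd d)}) = 1 * card D"
      using \<open>finite U\<close> \<open>finite D\<close> by (intro sum_multicount) auto
    then have "(\<Sum>z\<in>U. N z * (N z - 1)) = card D" unfolding pairs_through by simp
    then show ?thesis unfolding D_def using \<open>finite X\<close> by (simp only: card_offdiag)
  qed
  have indicator_ge: "1 - real (N z) + real (N z * (N z - 1)) / 3 \<le> (if N z = 0 then 1 else 0)"
    if "z \<in> U" for z
  proof -
    have "N z \<in> {0, 1, 2, 3}" using through[OF that] unfolding N_def by auto
    then show ?thesis by auto
  qed
  have "U - (\<Union>x\<in>X. L x) = {z \<in> U. N z = 0}"
    unfolding N_def using \<open>finite X\<close> by auto
  then have "real (card (U - (\<Union>x\<in>X. L x))) = (\<Sum>z\<in>U. if N z = 0 then 1 else 0)"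
    using \<open>finite U\<close> by (simp add: sum.If_cases Int_def)
  also have "\<dots> \<ge> (\<Sum>z\<in>U. 1 - real (N z) + real (N z * (N z - 1)) / 3)"
    by (rule sum_mono) (rule indicator_ge)
  also have "(\<Sum>z\<in>U. 1 - real (N z) + real (N z * (N z - 1)) / 3)
      = real (card U) - real (\<Sum>z\<in>U. N z) + real (\<Sum>z\<in>U. N z * (N z - 1)) / 3"
    by (simp add: sum.distrib sum_subtractf sum_divide_distrib[symmetric])
  finally show ?thesis unfolding first_moment second_moment .
qed

definition cubic :: "'a::field \<Rightarrow> 'a \<Rightarrow> 'a \<Rightarrow> 'a \<Rightarrow> 'a" where
  "cubic l0 l1 l2 x = x ^ 3 - l2 * x ^ 2 - l1 * x - l0"

lemma poly_cubic: "poly [:- l0, - l1, - l2, 1:] x = cubic l0 l1 l2 x"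
  by (simp add: cubic_def algebra_simps power2_eq_square power3_eq_cube)

lemma poly_reflected_cubic: "poly [:l0, - (l1 - 1), l2, 1:] x = - cubic l0 (l1 - 1) l2 (- x)"
  by (simp add: cubic_def algebra_simps power2_eq_square power3_eq_cube)

lemma irreducible_cubic_iff: "irreducible [:- l0, - l1, - l2, 1:] \<longleftrightarrow> (\<forall>x. cubic l0 l1 l2 x \<noteq> 0)"
  unfolding poly_cubic[symmetric] by (rule irreducible_iff_no_root_if_degree_le_3) simp_all

lemma reducible_reflected_cubic_iff:
  "\<not> irreducible [:l0, - (l1 - 1), l2, 1:] \<longleftrightarrow> (\<exists>c. cubic l0 (l1 - 1) l2 c = 0)"
proof -
  have "irreducible [:l0, - (l1 - 1), l2, 1:] \<longleftrightarrow> (\<forall>x. poly [:l0, - (l1 - 1), l2, 1:] x \<noteq> 0)"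
    by (rule irreducible_iff_no_root_if_degree_le_3) simp_all
  then show ?thesis unfolding poly_reflected_cubic by (metis minus_minus neg_equal_0_iff_equal)
qed

lemma card_cubic_roots_le: "card {x. cubic l0 l1 l2 x = 0} \<le> 3"
proof -
  have "card {x. poly [:- l0, - l1, - l2, 1:] x = 0} \<le> degree [:- l0, - l1, - l2, 1:]"
    by (rule card_poly_roots_bound) simp
  then show ?thesis unfolding poly_cubic by simp
qed

lemma cubic_eq_0_iff: "cubic l0 l1 l2 x = 0 \<longleftrightarrow> l0 = cubic 0 l1 l2 x"
  by (auto simp: cubic_def)

lemma cubic_root_iff_on_line:
  fixes c x :: "'a::field"
  assumes "cubic l0 (l1 - 1) l2 c = 0" and "x \<noteq> c"
  shows "cubic l0 l1 l2 x = 0 \<longleftrightarrow> l1 + l2 * (x + c) = x ^ 2 + x * c + c ^ 2 - c / (x - c)"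
proof -
  define Q where "Q = x ^ 2 + x * c + c ^ 2 - l2 * (x + c) - l1"
  have "cubic l0 l1 l2 x = (x - c) * Q - c"
    using assms(1) by (simp add: Q_def cubic_def algebra_simps power2_eq_square power3_eq_cube)
  also have "\<dots> = 0 \<longleftrightarrow> Q = c / (x - c)"
    using assms(2) by (auto simp: eq_divide_eq algebra_simps)
  also have "\<dots> \<longleftrightarrow> l1 + l2 * (x + c) = x ^ 2 + x * c + c ^ 2 - c / (x - c)"
    unfolding Q_def by (auto simp: algebra_simps)
  finally show ?thesis .
qed

lemma card_affine_line:
  fixes s k :: "'a::{finite,field}"
  shows "card {(a, b). a + b * s = k} = card (UNIV :: 'a set)"
proof -
  have "{(a, b). a + b * s = k} = (\<lambda>b. (k - b * s, b)) ` UNIV" by (auto simp: algebra_simps)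
  moreover have "inj (\<lambda>b. (k - b * s, b))" by (auto intro: injI)
  ultimately show ?thesis by (simp add: card_image)
qed

lemma card_affine_lines_Int:
  fixes s s' k k' :: "'a::field"
  assumes "s \<noteq> s'"
  shows "card ({(a, b). a + b * s = k} \<inter> {(a, b). a + b * s' = k'}) = 1"
proof -
  define b0 where "b0 = (k - k') / (s - s')"
  have "{(a, b). a + b * s = k} \<inter> {(a, b). a + b * s' = k'} = {(k - b0 * s, b0)}"
  proof (intro equalityI subsetI)
    fix z assume "z \<in> {(a, b). a + b * s = k} \<inter> {(a, b). a + b * s' = k'}"
    then obtain a b where z: "z = (a, b)" "a + b * s = k" "a + b * s' = k'" by auto
    then have "b * (s - s') = k - k'" by (auto simp: algebra_simps)
    with assms have "b = b0" by (simp add: b0_def field_simps)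
    with z show "z \<in> {(k - b0 * s, b0)}" by (auto simp: algebra_simps)
  next
    have "b0 * (s - s') = k - k'" using assms by (simp add: b0_def)
    then show "z \<in> {(a, b). a + b * s = k} \<inter> {(a, b). a + b * s' = k'}" if "z \<in> {(k - b0 * s, b0)}" for z
      using that by (auto simp: algebra_simps)
  qed
  then show ?thesis by simp
qed

lemma card_field_ge_2: "2 \<le> card (UNIV :: 'a::{finite,field} set)"
proof -
  have "card {0, 1 :: 'a} \<le> card (UNIV :: 'a set)" by (rule card_mono) simp_all
  then show ?thesis by simp
qed

definition root_line :: "'a::field \<Rightarrow> 'a \<Rightarrow> ('a \<times> 'a) set" where
  "root_line c x = {(a, b). a + b * (x + c) = x ^ 2 + x * c + c ^ 2 - c / (x - c)}"

lemma card_rootless_cubics_with_shifted_root: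
  fixes c :: "'a::field"
  assumes "c \<noteq> 0"
  shows "card {(l0, l1, l2). (\<forall>x. cubic l0 l1 l2 x \<noteq> 0) \<and> cubic l0 (l1 - 1) l2 c = 0}
    = card (- (\<Union>x\<in>- {c}. root_line c x))"
proof -
  define T where "T = {(l0, l1, l2). (\<forall>x. cubic l0 l1 l2 x \<noteq> 0) \<and> cubic l0 (l1 - 1) l2 c = 0}"
  have "snd ` T = - (\<Union>x\<in>- {c}. root_line c x)"
  proof (intro equalityI subsetI)
    fix z assume "z \<in> snd ` T"
    then obtain l0 l1 l2 where z: "z = (l1, l2)" and rootless: "\<forall>x. cubic l0 l1 l2 x \<noteq> 0"
      and shifted_root: "cubic l0 (l1 - 1) l2 c = 0"
      by (auto simp: T_def)
    have "z \<notin> root_line c x" if "x \<noteq> c" for x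
      using rootless cubic_root_iff_on_line[OF shifted_root that] by (auto simp: z root_line_def)
    then show "z \<in> - (\<Union>x\<in>- {c}. root_line c x)" by blast
  next
    fix z assume z: "z \<in> - (\<Union>x\<in>- {c}. root_line c x)"
    obtain l1 l2 where l12: "z = (l1, l2)" by (cases z)
    define l0 where "l0 = cubic 0 (l1 - 1) l2 c"
    have shifted_root: "cubic l0 (l1 - 1) l2 c = 0" by (simp add: cubic_eq_0_iff l0_def)
    have "cubic l0 l1 l2 x \<noteq> 0" for x
    proof (cases "x = c")
      case True
      then have "cubic l0 l1 l2 x = - c" using shifted_root by (simp add: cubic_def algebra_simps)
      with assms show ?thesis by simp
    next
      case False
      with z show ?thesis
        unfolding cubic_root_iff_on_line[OF shifted_root False] by (auto simp: l12 root_line_def)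
    qed
    with shifted_root have "(l0, l1, l2) \<in> T" by (simp add: T_def)
    then show "z \<in> snd ` T" unfolding l12 by force
  qed
  moreover have "inj_on snd T"
    by (auto intro!: inj_onI simp: T_def cubic_eq_0_iff)
  ultimately show ?thesis unfolding T_def[symmetric] by (metis card_image)
qed

lemma card_root_lines_through_le: "card {x \<in> - {c}. z \<in> root_line c x} \<le> 3"
proof -
  obtain a b where z: "z = (a, b)" by (cases z)
  have shifted_root: "cubic (cubic 0 (a - 1) b c) (a - 1) b c = 0" by (simp add: cubic_eq_0_iff)
  have "{x \<in> - {c}. z \<in> root_line c x} \<subseteq> {x. cubic (cubic 0 (a - 1) b c) a b x = 0}"
    using cubic_root_iff_on_line[OF shifted_root] by (auto simp: z root_line_def)
  moreover have "finite {x. cubic (cubic 0 (a - 1) b c) a b x = 0}"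
    using poly_roots_finite[of "[:- cubic 0 (a - 1) b c, - a, - b, 1:]"] unfolding poly_cubic by simp
  ultimately have "card {x \<in> - {c}. z \<in> root_line c x} \<le> card {x. cubic (cubic 0 (a - 1) b c) a b x = 0}"
    by (intro card_mono)
  also have "\<dots> \<le> 3" by (rule card_cubic_roots_le)
  finally show ?thesis .
qed

lemma card_rootless_cubics_with_shifted_root_ge:
  fixes c :: "'a::{finite,field}"
  assumes "c \<noteq> 0"
  defines "q \<equiv> card (UNIV :: 'a set)"
  shows "real q + (real q - 1) * (real q - 2) / 3
    \<le> real (card {(l0, l1, l2). (\<forall>x. cubic l0 l1 l2 x \<noteq> 0) \<and> cubic l0 (l1 - 1) l2 c = 0})"
proof -
  define X where "X = - {c}"
  have bound: "real (card (UNIV :: ('a \<times> 'a) set)) - real (card X * q) + real (card X * (card X - 1)) / 3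
      \<le> real (card (UNIV - (\<Union>x\<in>X. root_line c x)))"
  proof (rule card_uncovered_ge)
    show "card (root_line c x) = q" for x
      unfolding root_line_def q_def by (rule card_affine_line)
    show "card (root_line c x \<inter> root_line c y) = 1" if "x \<noteq> y" for x y
      unfolding root_line_def using that by (intro card_affine_lines_Int) simp
    show "card {x \<in> X. z \<in> root_line c x} \<le> 3" for z
      unfolding X_def by (rule card_root_lines_through_le)
  qed simp_all
  have card_plane: "card (UNIV :: ('a \<times> 'a) set) = q * q"
    unfolding q_def UNIV_Times_UNIV[symmetric] card_cartesian_product ..
  have "card X = q - 1" unfolding X_def q_def by (simp add: Compl_eq_Diff_UNIV card_Diff_subset)
  moreover have "2 \<le> q" unfolding q_def by (rule card_field_ge_2)
  ultimately have card_X: "real (card X * q) = (real q - 1) * real q"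
    "real (card X * (card X - 1)) = (real q - 1) * (real q - 2)"
    by simp_all
  show ?thesis
    using bound unfolding card_rootless_cubics_with_shifted_root[OF assms(1)] card_plane card_X
    by (simp add: X_def Compl_eq_Diff_UNIV algebra_simps)
qed

theorem lemma4p5:
  fixes q :: nat
  assumes "q = card (UNIV :: 'a :: {finite, field} set)"
  shows "real (card {(l0 :: 'a, l1 :: 'a, l2 :: 'a).
            irreducible [:- l0, - l1, - l2, 1:] \<and>
            \<not> irreducible [:l0, - (l1 - 1), l2, 1:]})
         \<ge> real q * (real q - 1)^2 / 9 - 2 * (real q - 1) / 3"
proof -
  define S where "S = {(l0 :: 'a, l1, l2). (\<forall>x. cubic l0 l1 l2 x \<noteq> 0) \<and> (\<exists>c. cubic l0 (l1 - 1) l2 c = 0)}"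
  define R where "R = (\<lambda>(l0, l1, l2) c. cubic l0 (l1 - 1) l2 (c :: 'a) = 0)"
  define B where "B = real q + (real q - 1) * (real q - 2) / 3"
  have q_ge_2: "2 \<le> q" unfolding assms by (rule card_field_ge_2)
  have target_eq: "{(l0 :: 'a, l1 :: 'a, l2 :: 'a).
      irreducible [:- l0, - l1, - l2, 1:] \<and> \<not> irreducible [:l0, - (l1 - 1), l2, 1:]} = S"
    unfolding S_def irreducible_cubic_iff reducible_reflected_cubic_iff ..
  have fibre_bound: "B \<le> real (card {t \<in> S. R t c})" if "c \<in> - {0}" for c
  proof -
    have "{t \<in> S. R t c} = {(l0, l1, l2). (\<forall>x. cubic l0 l1 l2 x \<noteq> 0) \<and> cubic l0 (l1 - 1) l2 c = 0}"
      by (auto simp: S_def R_def)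
    with that show ?thesis
      using card_rootless_cubics_with_shifted_root_ge[of c] unfolding B_def assms by simp
  qed
  have "(real q - 1) * B = (\<Sum>c\<in>- {0 :: 'a}. B)"
    using q_ge_2 unfolding assms by (simp add: Compl_eq_Diff_UNIV card_Diff_subset)
  also have "\<dots> \<le> (\<Sum>c\<in>- {0}. real (card {t \<in> S. R t c}))"
    using fibre_bound by (rule sum_mono)
  also have "\<dots> \<le> real (3 * card S)"
    unfolding of_nat_sum[symmetric] of_nat_le_iff
  proof (rule sum_card_le_by_double_counting)
    show "card {c \<in> - {0}. R t c} \<le> 3" for t
    proof -
      obtain l0 l1 l2 where t: "t = (l0, l1, l2)" by (cases t)
      have "card {c \<in> - {0}. R t c} \<le> card {c. cubic l0 (l1 - 1) l2 c = 0}"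
        by (rule card_mono) (auto simp: t R_def)
      also have "\<dots> \<le> 3" by (rule card_cubic_roots_le)
      finally show ?thesis .
    qed
  qed simp_all
  finally have "(real q - 1) * B \<le> 3 * real (card S)" by simp
  moreover have "0 \<le> (real q - 1) * (real q + 8)" using q_ge_2 by simp
  ultimately show ?thesis
    unfolding target_eq B_def by (simp add: field_simps power2_eq_square)
qed

end
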